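(* Let $e,f\in\mathsf{Exp}/{\sim}$ and $v_x\in V$. For all $n\in\mathbb{N}$, if $e\sim^{(n)}f$ then $\mu v_x.e\sim^{(n)}\mu v_x.f$.
   Context: Fix variables $V=\{v_1,v_2,\dots\}$ and letters $\Sigma$. Expressions: $e\in\mathsf{Exp}::=0\mid v\ (v\in V)\mid a.e\mid e+f\mid\mu v.e$ ($\mu v$ binds $v$); $e[\vec f/\vec v]$ is simultaneous capture-avoiding substitution. The prechart $(\mathsf{Exp},\partial)$: least relations with $a.e\xrightarrow{a}e$; $v\rhd v$; $e+f$ has all transitions and outputs of $e$ and of $f$; $\mu w.e\rhd v$ if $e\rhd v$, $v\ne w$; $\mu v.e\xrightarrow{a}e'[\mu v.e/v]$ if $e\xrightarrow{a}e'$. Bisimilarity $\sim$ is a congruence for all operations including substitution; $\mathsf{Exp}/{\sim}$ is a prechart via $[e]\xrightarrow{a}[e']$ iff $e\xrightarrow{a}e'$, $[e]\rhd v$ iff $e\rhd v$. Stratified bisimilarity on it: $x\sim^{(0)}y$ always; $x\sim^{(k+1)}y$ iff $x,y$ have the same outputs, every $x\xrightarrow{a}x'$ is matched by some $y\xrightarrow{a}y'$ with $x'\sim^{(k)}y'$, and symmetrically. *)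

theory Defs
  imports Main
begin

datatype 'a exp = Zero | Var nat | Pre 'a "'a exp" | Plus "'a exp" "'a exp" | Mu nat "'a exp"

fun fv :: "'a exp \<Rightarrow> nat set" where
  "fv Zero = {}"
| "fv (Var v) = {v}"
| "fv (Pre a e) = fv e"
| "fv (Plus e f) = fv e \<union> fv f"
| "fv (Mu v e) = fv e - {v}"

lemma finite_fv[simp]: "finite (fv e)"
  by (induction e) auto

definition fresh_for :: "nat \<Rightarrow> nat set \<Rightarrow> nat" where
  "fresh_for w A = (if w \<notin> A then w else Suc (Max A))"

fun ssubst :: "(nat \<Rightarrow> 'a exp) \<Rightarrow> 'a exp \<Rightarrow> 'a exp" where
  "ssubst \<sigma> Zero = Zero"
| "ssubst \<sigma> (Var v) = \<sigma> v"
| "ssubst \<sigma> (Pre a e) = Pre a (ssubst \<sigma> e)"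
| "ssubst \<sigma> (Plus e f) = Plus (ssubst \<sigma> e) (ssubst \<sigma> f)"
| "ssubst \<sigma> (Mu w e) =
     (let w' = fresh_for w (\<Union>u\<in>fv (Mu w e). fv (\<sigma> u))
      in Mu w' (ssubst (\<sigma>(w := Var w')) e))"

definition subst1 :: "'a exp \<Rightarrow> 'a exp \<Rightarrow> nat \<Rightarrow> 'a exp" where
  "subst1 e g v = ssubst (Var(v := g)) e"

inductive out :: "'a exp \<Rightarrow> nat \<Rightarrow> bool" where
  out_var: "out (Var v) v"
| out_plusL: "out e v \<Longrightarrow> out (Plus e f) v"
| out_plusR: "out f v \<Longrightarrow> out (Plus e f) v"
| out_mu: "out e v \<Longrightarrow> v \<noteq> w \<Longrightarrow> out (Mu w e) v"

inductive step :: "'a exp \<Rightarrow> 'a \<Rightarrow> 'a exp \<Rightarrow> bool" where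
  step_pre: "step (Pre a e) a e"
| step_plusL: "step e a e' \<Longrightarrow> step (Plus e f) a e'"
| step_plusR: "step f a f' \<Longrightarrow> step (Plus e f) a f'"
| step_mu: "step e a e' \<Longrightarrow> step (Mu v e) a (subst1 e' (Mu v e) v)"

definition is_bisim :: "('a exp \<Rightarrow> 'a exp \<Rightarrow> bool) \<Rightarrow> bool" where
  "is_bisim R \<longleftrightarrow> (\<forall>e f. R e f \<longrightarrow>
      (\<forall>v. out e v \<longleftrightarrow> out f v)
    \<and> (\<forall>a e'. step e a e' \<longrightarrow> (\<exists>f'. step f a f' \<and> R e' f'))
    \<and> (\<forall>a f'. step f a f' \<longrightarrow> (\<exists>e'. step e a e' \<and> R e' f')))"

definition bisim :: "'a exp \<Rightarrow> 'a exp \<Rightarrow> bool" where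
  "bisim e f \<longleftrightarrow> (\<exists>R. is_bisim R \<and> R e f)"

text \<open>The quotient Exp/~ : bisimilarity classes, as sets of expressions.\<close>
definition bisim_rel :: "('a exp \<times> 'a exp) set" where
  "bisim_rel = {(e, f). bisim e f}"

definition ExpQ :: "'a exp set set" where
  "ExpQ = UNIV // bisim_rel"

definition qstep :: "'a exp set \<Rightarrow> 'a \<Rightarrow> 'a exp set \<Rightarrow> bool" where
  "qstep X a Y \<longleftrightarrow> (\<exists>e\<in>X. \<exists>e'\<in>Y. step e a e')"

definition qout :: "'a exp set \<Rightarrow> nat \<Rightarrow> bool" where
  "qout X v \<longleftrightarrow> (\<exists>e\<in>X. out e v)"

text \<open>mu v on Exp/~ : mu v.[e] = [mu v.e].\<close>
definition qmu :: "nat \<Rightarrow> 'a exp set \<Rightarrow> 'a exp set" where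
  "qmu v X = {g. \<exists>e\<in>X. bisim g (Mu v e)}"

fun qstrat :: "nat \<Rightarrow> 'a exp set \<Rightarrow> 'a exp set \<Rightarrow> bool" where
  "qstrat 0 X Y = True"
| "qstrat (Suc k) X Y =
     ((\<forall>v. qout X v \<longleftrightarrow> qout Y v)
    \<and> (\<forall>a X'. X' \<in> ExpQ \<longrightarrow> qstep X a X' \<longrightarrow> (\<exists>Y'\<in>ExpQ. qstep Y a Y' \<and> qstrat k X' Y'))
    \<and> (\<forall>a Y'. Y' \<in> ExpQ \<longrightarrow> qstep Y a Y' \<longrightarrow> (\<exists>X'\<in>ExpQ. qstep X a X' \<and> qstrat k X' Y')))"

end

theory Submission
  imports Defs
begin

(* A class in Exp/~ consists of
   bisimilar, hence k-bisimilar, expressions, so qstrat n X Y amounts to strat n between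
   representatives of X and Y. It therefore suffices that strat n is a congruence for Mu.
   The transitions of Mu v e are the unfoldings e'[Mu v e/v] of transitions e -a-> e', so
   this reduces to strat k being a congruence for substitution. That is proved by induction
   on k, simultaneously with the fact that substituting twice agrees with substituting the
   composite up to strat k: capture-avoiding substitution renames binders, so the two only
   agree up to alpha-conversion, and both facts at level k are needed at level k + 1. *)

lemma fresh_for_notin: "finite A \<Longrightarrow> fresh_for w A \<notin> A"
  unfolding fresh_for_def by (auto dest: Max_ge)

lemma ssubst_MuE:
  obtains w' where "ssubst \<sigma> (Mu w e) = Mu w' (ssubst (\<sigma>(w := Var w')) e)"
    and "\<And>u. u \<in> fv (Mu w e) \<Longrightarrow> w' \<notin> fv (\<sigma> u)"
proof -
  define w' where "w' = fresh_for w (\<Union>u\<in>fv (Mu w e). fv (\<sigma> u))"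
  have "ssubst \<sigma> (Mu w e) = Mu w' (ssubst (\<sigma>(w := Var w')) e)"
    unfolding w'_def by (simp add: Let_def)
  moreover have "w' \<notin> fv (\<sigma> u)" if "u \<in> fv (Mu w e)" for u
    using fresh_for_notin[of "\<Union>u\<in>fv (Mu w e). fv (\<sigma> u)" w] that unfolding w'_def by auto
  ultimately show thesis by (rule that)
qed

lemma ssubst_cong: "(\<And>u. u \<in> fv e \<Longrightarrow> \<sigma> u = \<tau> u) \<Longrightarrow> ssubst \<sigma> e = ssubst \<tau> e"
proof (induction e arbitrary: \<sigma> \<tau>)
  case (Mu w e)
  have fv_eq: "(\<Union>u\<in>fv (Mu w e). fv (\<sigma> u)) = (\<Union>u\<in>fv (Mu w e). fv (\<tau> u))"
    using Mu.prems by auto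
  show ?case
    unfolding ssubst.simps fv_eq Let_def
    by (rule arg_cong[where f = "Mu _"], rule Mu.IH) (use Mu.prems in auto)
next
  case (Pre a e)
  show ?case using Pre.IH[of \<sigma> \<tau>] Pre.prems by simp
next
  case (Plus e f)
  show ?case using Plus.IH(1)[of \<sigma> \<tau>] Plus.IH(2)[of \<sigma> \<tau>] Plus.prems by simp
qed simp_all

lemma ssubst_Var: "ssubst Var e = e"
proof (induction e)
  case (Mu w e)
  have "fresh_for w (\<Union>u\<in>fv (Mu w e). fv (Var u :: 'a exp)) = w"
    unfolding fresh_for_def by simp
  with Mu show ?case by (simp add: Let_def)
qed simp_all

lemma ssubst_id: "(\<And>u. u \<in> fv e \<Longrightarrow> \<sigma> u = Var u) \<Longrightarrow> ssubst \<sigma> e = e"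
  using ssubst_cong[of e \<sigma> Var] ssubst_Var by metis

lemma subst1_nonfree: "v \<notin> fv e \<Longrightarrow> subst1 e g v = e"
  unfolding subst1_def by (rule ssubst_id) auto

lemma fv_ssubst: "fv (ssubst \<sigma> e) = (\<Union>u\<in>fv e. fv (\<sigma> u))"
proof (induction e arbitrary: \<sigma>)
  case (Mu w e)
  obtain w' where eq: "ssubst \<sigma> (Mu w e) = Mu w' (ssubst (\<sigma>(w := Var w')) e)"
    and fresh: "\<And>u. u \<in> fv (Mu w e) \<Longrightarrow> w' \<notin> fv (\<sigma> u)"
    using ssubst_MuE[of \<sigma> w e] by blast
  have "fv (ssubst \<sigma> (Mu w e)) = (\<Union>u\<in>fv e. fv ((\<sigma>(w := Var w')) u)) - {w'}"
    using eq Mu.IH by simp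
  also have "\<dots> = (\<Union>u\<in>fv (Mu w e). fv (\<sigma> u))"
    using fresh by (auto split: if_splits)
  finally show ?case .
qed simp_all

inductive_simps out_Zero[simp]: "out Zero v"
inductive_simps out_Var[simp]: "out (Var w) v"
inductive_simps out_Pre[simp]: "out (Pre a e) v"
inductive_simps out_Plus[simp]: "out (Plus e f) v"
inductive_simps out_Mu[simp]: "out (Mu w e) v"
inductive_simps step_Zero[simp]: "step Zero a r"
inductive_simps step_Var[simp]: "step (Var w) a r"
inductive_simps step_Pre[simp]: "step (Pre b e) a r"
inductive_simps step_Plus[simp]: "step (Plus e f) a r"
inductive_simps step_Mu[simp]: "step (Mu w e) a r"

lemma out_fv: "out e v \<Longrightarrow> v \<in> fv e"
  by (induction rule: out.induct) auto

lemma fv_step: "step e a e' \<Longrightarrow> fv e' \<subseteq> fv e"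
  by (induction rule: step.induct) (auto simp: subst1_def fv_ssubst split: if_splits)

lemma out_ssubst: "out (ssubst \<sigma> e) v \<longleftrightarrow> (\<exists>u. out e u \<and> out (\<sigma> u) v)"
proof (induction e arbitrary: \<sigma>)
  case (Mu w e)
  obtain w' where eq: "ssubst \<sigma> (Mu w e) = Mu w' (ssubst (\<sigma>(w := Var w')) e)"
    and fresh: "\<And>u. u \<in> fv (Mu w e) \<Longrightarrow> w' \<notin> fv (\<sigma> u)"
    using ssubst_MuE[of \<sigma> w e] by blast
  have "out (ssubst \<sigma> (Mu w e)) v \<longleftrightarrow> (\<exists>u. out e u \<and> out ((\<sigma>(w := Var w')) u) v) \<and> v \<noteq> w'"
    unfolding eq out_Mu Mu.IH ..
  also have "\<dots> \<longleftrightarrow> (\<exists>u. out (Mu w e) u \<and> out (\<sigma> u) v)"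
  proof
    assume "(\<exists>u. out e u \<and> out ((\<sigma>(w := Var w')) u) v) \<and> v \<noteq> w'"
    then obtain u where "out e u" "out ((\<sigma>(w := Var w')) u) v" "v \<noteq> w'"
      by blast
    then show "\<exists>u. out (Mu w e) u \<and> out (\<sigma> u) v"
      by (cases "u = w") auto
  next
    assume "\<exists>u. out (Mu w e) u \<and> out (\<sigma> u) v"
    then obtain u where u: "out e u" "u \<noteq> w" "out (\<sigma> u) v"
      by auto
    then have "v \<noteq> w'"
      using fresh[of u] out_fv[of e u] out_fv[of "\<sigma> u" v] by auto
    with u show "(\<exists>u. out e u \<and> out ((\<sigma>(w := Var w')) u) v) \<and> v \<noteq> w'"
      by auto
  qed
  finally show ?case .
qed auto

lemma step_ssubst_outI: "out s u \<Longrightarrow> step (\<sigma> u) a r \<Longrightarrow> step (ssubst \<sigma> s) a r"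
proof (induction s arbitrary: \<sigma>)
  case (Mu w e)
  obtain w' where eq: "ssubst \<sigma> (Mu w e) = Mu w' (ssubst (\<sigma>(w := Var w')) e)"
    and fresh: "\<And>u. u \<in> fv (Mu w e) \<Longrightarrow> w' \<notin> fv (\<sigma> u)"
    using ssubst_MuE[of \<sigma> w e] by blast
  have u: "out e u" "u \<noteq> w" using Mu.prems(1) by simp_all
  then have "step (ssubst (\<sigma>(w := Var w')) e) a r"
    using Mu.IH Mu.prems(2) by simp
  then have "step (ssubst \<sigma> (Mu w e)) a (subst1 r (ssubst \<sigma> (Mu w e)) w')"
    unfolding eq by (rule step_mu)
  moreover have "w' \<notin> fv r"
    using fresh[of u] fv_step[OF Mu.prems(2)] out_fv[OF Mu.prems(1)] by auto
  ultimately show ?case by (simp add: subst1_nonfree)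
qed (auto intro: step_plusL step_plusR)

fun strat :: "nat \<Rightarrow> 'a exp \<Rightarrow> 'a exp \<Rightarrow> bool" where
  "strat 0 s t = True"
| "strat (Suc k) s t =
     ((\<forall>v. out s v \<longleftrightarrow> out t v)
    \<and> (\<forall>a s'. step s a s' \<longrightarrow> (\<exists>t'. step t a t' \<and> strat k s' t'))
    \<and> (\<forall>a t'. step t a t' \<longrightarrow> (\<exists>s'. step s a s' \<and> strat k s' t')))"

lemma strat_SucI:
  assumes "\<And>v. out s v \<longleftrightarrow> out t v"
    and "\<And>a s'. step s a s' \<Longrightarrow> \<exists>t'. step t a t' \<and> strat k s' t'"
    and "\<And>a t'. step t a t' \<Longrightarrow> \<exists>s'. step s a s' \<and> strat k s' t'"
  shows "strat (Suc k) s t"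
  using assms by simp

lemma strat_SucD:
  assumes "strat (Suc k) s t"
  shows "out s v \<longleftrightarrow> out t v"
    and "step s a s' \<Longrightarrow> \<exists>t'. step t a t' \<and> strat k s' t'"
    and "step t a t' \<Longrightarrow> \<exists>s'. step s a s' \<and> strat k s' t'"
  using assms by simp_all

lemma strat_refl: "strat k s s"
  by (induction k arbitrary: s) auto

lemma strat_sym: "strat k s t \<Longrightarrow> strat k t s"
proof (induction k arbitrary: s t)
  case (Suc k)
  then show ?case by simp blast
qed simp

lemma strat_trans [trans]: "strat k s t \<Longrightarrow> strat k t r \<Longrightarrow> strat k s r"
proof (induction k arbitrary: s t r)
  case (Suc k)
  note st = strat_SucD[OF Suc.prems(1)] and tr = strat_SucD[OF Suc.prems(2)]
  show ?case
  proof (rule strat_SucI)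
    show "out s v \<longleftrightarrow> out r v" for v
      using st(1) tr(1) by blast
  next
    fix a s' assume "step s a s'"
    then obtain t' where t': "step t a t'" "strat k s' t'" using st(2) by blast
    then obtain r' where "step r a r'" "strat k t' r'" using tr(2) by blast
    then show "\<exists>r'. step r a r' \<and> strat k s' r'" using t' Suc.IH by blast
  next
    fix a r' assume "step r a r'"
    then obtain t' where t': "step t a t'" "strat k t' r'" using tr(3) by blast
    then obtain s' where "step s a s'" "strat k s' t'" using st(3) by blast
    then show "\<exists>s'. step s a s' \<and> strat k s' r'" using t' Suc.IH by blast
  qed
qed simp

lemma strat_Suc_imp_strat: "strat (Suc k) s t \<Longrightarrow> strat k s t"
proof (induction k arbitrary: s t)
  case (Suc k)
  note st = strat_SucD[OF Suc.prems]
  show ?case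
  proof (rule strat_SucI)
    show "out s v \<longleftrightarrow> out t v" for v
      using st(1) .
    show "\<exists>t'. step t a t' \<and> strat k s' t'" if "step s a s'" for a s'
      using st(2)[OF that] Suc.IH by blast
    show "\<exists>s'. step s a s' \<and> strat k s' t'" if "step t a t'" for a t'
      using st(3)[OF that] Suc.IH by blast
  qed
qed simp

(* The induction step of strat_ssubst_and_comp: its two statements at level k are assumed. *)
context
  fixes k :: nat
  assumes strat_ssubst_k: "\<And>(s :: 'a exp) t \<sigma> \<tau>. strat k s t \<Longrightarrow> (\<And>u. strat k (\<sigma> u) (\<tau> u)) \<Longrightarrow>
      strat k (ssubst \<sigma> s) (ssubst \<tau> t)"
    and strat_ssubst_comp_k: "\<And>\<sigma> \<tau> (e :: 'a exp).
      strat k (ssubst \<tau> (ssubst \<sigma> e)) (ssubst (\<lambda>u. ssubst \<tau> (\<sigma> u)) e)"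
begin

lemma strat_unfold_ssubst:
  fixes \<sigma> :: "nat \<Rightarrow> 'a exp"
  assumes fresh: "\<And>u. u \<in> fv (Mu w e) \<Longrightarrow> w' \<notin> fv (\<sigma> u)"
    and r: "strat k r (ssubst (\<sigma>(w := Var w')) e')" and fv_e': "fv e' \<subseteq> fv e"
  shows "strat k (subst1 r (ssubst \<sigma> (Mu w e)) w') (ssubst \<sigma> (subst1 e' (Mu w e) w))"
proof -
  define M where "M = ssubst \<sigma> (Mu w e)"
  have "strat k (subst1 r M w') (subst1 (ssubst (\<sigma>(w := Var w')) e') M w')"
    unfolding subst1_def using r strat_refl by (rule strat_ssubst_k)
  also have "strat k \<dots> (ssubst (\<lambda>u. subst1 ((\<sigma>(w := Var w')) u) M w') e')"
    unfolding subst1_def by (rule strat_ssubst_comp_k)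
  also have "ssubst (\<lambda>u. subst1 ((\<sigma>(w := Var w')) u) M w') e'
      = ssubst (\<lambda>u. ssubst \<sigma> ((Var(w := Mu w e)) u)) e'"
  proof (rule ssubst_cong)
    fix u assume "u \<in> fv e'"
    then show "subst1 ((\<sigma>(w := Var w')) u) M w' = ssubst \<sigma> ((Var(w := Mu w e)) u)"
      using fv_e' fresh[of u] by (auto simp: M_def subst1_nonfree) (simp add: subst1_def)
  qed
  also have "strat k \<dots> (ssubst \<sigma> (subst1 e' (Mu w e) w))"
    unfolding subst1_def by (rule strat_sym, rule strat_ssubst_comp_k)
  finally show ?thesis unfolding M_def .
qed

lemma step_ssubst_cases:
  fixes \<sigma> :: "nat \<Rightarrow> 'a exp"
  shows "step (ssubst \<sigma> s) a r \<Longrightarrow>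
    (\<exists>s'. step s a s' \<and> strat k r (ssubst \<sigma> s')) \<or> (\<exists>u. out s u \<and> step (\<sigma> u) a r)"
proof (induction s arbitrary: \<sigma> r)
  case (Mu w e)
  obtain w' where eq: "ssubst \<sigma> (Mu w e) = Mu w' (ssubst (\<sigma>(w := Var w')) e)"
    and fresh: "\<And>u. u \<in> fv (Mu w e) \<Longrightarrow> w' \<notin> fv (\<sigma> u)"
    using ssubst_MuE[of \<sigma> w e] by blast
  obtain r' where r': "step (ssubst (\<sigma>(w := Var w')) e) a r'"
    and r: "r = subst1 r' (ssubst \<sigma> (Mu w e)) w'"
    using Mu.prems unfolding eq step_Mu by blast
  from Mu.IH[OF r'] show ?case
  proof (elim disjE exE conjE)
    fix e' assume "step e a e'" and "strat k r' (ssubst (\<sigma>(w := Var w')) e')"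
    then have "strat k r (ssubst \<sigma> (subst1 e' (Mu w e) w))"
      unfolding r using fresh by (intro strat_unfold_ssubst fv_step)
    with \<open>step e a e'\<close> show ?case by (blast intro: step.step_mu)
  next
    fix u assume u: "out e u" and "step ((\<sigma>(w := Var w')) u) a r'"
    then have "u \<noteq> w" and step_u: "step (\<sigma> u) a r'" by (auto split: if_splits)
    then have "w' \<notin> fv r'"
      using fresh[of u] fv_step[OF step_u] out_fv[OF u] by auto
    then have "r = r'" unfolding r by (rule subst1_nonfree)
    with u \<open>u \<noteq> w\<close> step_u show ?case by auto
  qed
next
  case (Plus e f)
  then consider "step (ssubst \<sigma> e) a r" | "step (ssubst \<sigma> f) a r"
    by auto
  then show ?case
  proof cases
    case 1
    from Plus.IH(1)[OF this] show ?thesis by (blast intro: step_plusL out_plusL)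
  next
    case 2
    from Plus.IH(2)[OF this] show ?thesis by (blast intro: step_plusR out_plusR)
  qed
qed (auto intro: step_pre strat_refl)

lemma step_ssubst_strat:
  fixes \<sigma> :: "nat \<Rightarrow> 'a exp"
  shows "step s a s' \<Longrightarrow> \<exists>r. step (ssubst \<sigma> s) a r \<and> strat k r (ssubst \<sigma> s')"
proof (induction s a s' arbitrary: \<sigma> rule: step.induct)
  case (step_mu e a e' w)
  obtain w' where eq: "ssubst \<sigma> (Mu w e) = Mu w' (ssubst (\<sigma>(w := Var w')) e)"
    and fresh: "\<And>u. u \<in> fv (Mu w e) \<Longrightarrow> w' \<notin> fv (\<sigma> u)"
    using ssubst_MuE[of \<sigma> w e] by blast
  obtain r where r: "step (ssubst (\<sigma>(w := Var w')) e) a r"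
    and r_strat: "strat k r (ssubst (\<sigma>(w := Var w')) e')"
    using step_mu.IH by blast
  have "step (ssubst \<sigma> (Mu w e)) a (subst1 r (ssubst \<sigma> (Mu w e)) w')"
    unfolding eq using r by (rule step.step_mu)
  moreover have "strat k (subst1 r (ssubst \<sigma> (Mu w e)) w') (ssubst \<sigma> (subst1 e' (Mu w e) w))"
    using fresh r_strat fv_step[OF step_mu.hyps] by (rule strat_unfold_ssubst)
  ultimately show ?case by blast
qed (auto intro: step.step_pre step.step_plusL step.step_plusR strat_refl)

lemma ssubst_step_simulation:
  fixes \<sigma> \<tau> :: "nat \<Rightarrow> 'a exp"
  assumes st: "strat (Suc k) s t" and \<sigma>\<tau>: "\<And>u. strat (Suc k) (\<sigma> u) (\<tau> u)"
    and r: "step (ssubst \<sigma> s) a r"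
  shows "\<exists>r'. step (ssubst \<tau> t) a r' \<and> strat k r r'"
  using step_ssubst_cases[OF r]
proof (elim disjE exE conjE)
  fix s' assume "step s a s'" and r_s': "strat k r (ssubst \<sigma> s')"
  then obtain t' where t': "step t a t'" "strat k s' t'"
    using strat_SucD(2)[OF st] by blast
  obtain r' where r': "step (ssubst \<tau> t) a r'" "strat k r' (ssubst \<tau> t')"
    using step_ssubst_strat[OF t'(1)] by blast
  have "strat k (ssubst \<sigma> s') (ssubst \<tau> t')"
    using t'(2) by (rule strat_ssubst_k) (rule strat_Suc_imp_strat[OF \<sigma>\<tau>])
  then have "strat k r r'"
    using r_s' strat_sym[OF r'(2)] strat_trans by blast
  with r'(1) show ?thesis by blast
next
  fix u assume "out s u" and "step (\<sigma> u) a r"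
  then obtain r' where r': "step (\<tau> u) a r'" "strat k r r'"
    using strat_SucD(2)[OF \<sigma>\<tau>] by blast
  have "out t u"
    using \<open>out s u\<close> strat_SucD(1)[OF st] by blast
  then have "step (ssubst \<tau> t) a r'"
    using r'(1) by (rule step_ssubst_outI)
  with r'(2) show ?thesis by blast
qed

lemma strat_ssubst_Suc:
  fixes \<sigma> \<tau> :: "nat \<Rightarrow> 'a exp"
  assumes st: "strat (Suc k) s t" and \<sigma>\<tau>: "\<And>u. strat (Suc k) (\<sigma> u) (\<tau> u)"
  shows "strat (Suc k) (ssubst \<sigma> s) (ssubst \<tau> t)"
proof (rule strat_SucI)
  show "out (ssubst \<sigma> s) v \<longleftrightarrow> out (ssubst \<tau> t) v" for v
    unfolding out_ssubst using strat_SucD(1)[OF st] strat_SucD(1)[OF \<sigma>\<tau>] by blast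
  show "\<exists>r'. step (ssubst \<tau> t) a r' \<and> strat k r r'" if "step (ssubst \<sigma> s) a r" for a r
    using st \<sigma>\<tau> that by (rule ssubst_step_simulation)
  show "\<exists>r'. step (ssubst \<sigma> s) a r' \<and> strat k r' r" if r: "step (ssubst \<tau> t) a r" for a r
  proof -
    obtain r' where "step (ssubst \<sigma> s) a r'" "strat k r r'"
      using ssubst_step_simulation[OF strat_sym[OF st] strat_sym[OF \<sigma>\<tau>] r] by blast
    then show ?thesis using strat_sym by blast
  qed
qed

lemma ssubst_ssubst_step_simulation:
  fixes \<sigma> \<tau> :: "nat \<Rightarrow> 'a exp"
  assumes r: "step (ssubst \<tau> (ssubst \<sigma> e)) a r"
  shows "\<exists>r'. step (ssubst (\<lambda>u. ssubst \<tau> (\<sigma> u)) e) a r' \<and> strat k r r'"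
  using step_ssubst_cases[OF r]
proof (elim disjE exE conjE)
  fix p assume p: "step (ssubst \<sigma> e) a p" and r_p: "strat k r (ssubst \<tau> p)"
  from step_ssubst_cases[OF p] show ?thesis
  proof (elim disjE exE conjE)
    fix e' assume e': "step e a e'" and p_e': "strat k p (ssubst \<sigma> e')"
    obtain r' where r': "step (ssubst (\<lambda>u. ssubst \<tau> (\<sigma> u)) e) a r'"
      and r'_e': "strat k r' (ssubst (\<lambda>u. ssubst \<tau> (\<sigma> u)) e')"
      using step_ssubst_strat[OF e'] by blast
    note r_p
    also have "strat k (ssubst \<tau> p) (ssubst \<tau> (ssubst \<sigma> e'))"
      using p_e' strat_refl by (rule strat_ssubst_k)
    also have "strat k \<dots> (ssubst (\<lambda>u. ssubst \<tau> (\<sigma> u)) e')"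
      by (rule strat_ssubst_comp_k)
    also have "strat k \<dots> r'"
      using r'_e' by (rule strat_sym)
    finally show ?thesis using r' by blast
  next
    fix u assume u: "out e u" and "step (\<sigma> u) a p"
    then obtain r' where r': "step (ssubst \<tau> (\<sigma> u)) a r'" "strat k r' (ssubst \<tau> p)"
      using step_ssubst_strat by blast
    have "step (ssubst (\<lambda>u. ssubst \<tau> (\<sigma> u)) e) a r'"
      using step_ssubst_outI[of e u "\<lambda>u. ssubst \<tau> (\<sigma> u)"] u r'(1) by simp
    moreover have "strat k r r'"
      using r_p strat_sym[OF r'(2)] by (rule strat_trans)
    ultimately show ?thesis by blast
  qed
next
  fix u' assume "out (ssubst \<sigma> e) u'" and "step (\<tau> u') a r"
  then obtain u where u: "out e u" and u_u': "out (\<sigma> u) u'"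
    by (auto simp: out_ssubst)
  from u_u' \<open>step (\<tau> u') a r\<close> have "step (ssubst \<tau> (\<sigma> u)) a r"
    by (rule step_ssubst_outI)
  then have "step (ssubst (\<lambda>u. ssubst \<tau> (\<sigma> u)) e) a r"
    using step_ssubst_outI[of e u "\<lambda>u. ssubst \<tau> (\<sigma> u)"] u by simp
  then show ?thesis using strat_refl by blast
qed

lemma ssubst_comp_step_simulation:
  fixes \<sigma> \<tau> :: "nat \<Rightarrow> 'a exp"
  assumes r: "step (ssubst (\<lambda>u. ssubst \<tau> (\<sigma> u)) e) a r"
  shows "\<exists>r'. step (ssubst \<tau> (ssubst \<sigma> e)) a r' \<and> strat k r' r"
  using step_ssubst_cases[OF r]
proof (elim disjE exE conjE)
  fix e' assume e': "step e a e'" and r_e': "strat k r (ssubst (\<lambda>u. ssubst \<tau> (\<sigma> u)) e')"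
  obtain p where p: "step (ssubst \<sigma> e) a p" "strat k p (ssubst \<sigma> e')"
    using step_ssubst_strat[OF e'] by blast
  obtain r' where r': "step (ssubst \<tau> (ssubst \<sigma> e)) a r'" "strat k r' (ssubst \<tau> p)"
    using step_ssubst_strat[OF p(1)] by blast
  note r'(2)
  also have "strat k (ssubst \<tau> p) (ssubst \<tau> (ssubst \<sigma> e'))"
    using p(2) strat_refl by (rule strat_ssubst_k)
  also have "strat k \<dots> (ssubst (\<lambda>u. ssubst \<tau> (\<sigma> u)) e')"
    by (rule strat_ssubst_comp_k)
  also have "strat k \<dots> r"
    using r_e' by (rule strat_sym)
  finally show ?thesis using r'(1) by blast
next
  fix u assume u: "out e u" and r_u: "step (ssubst \<tau> (\<sigma> u)) a r"
  from step_ssubst_cases[OF r_u] show ?thesis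
  proof (elim disjE exE conjE)
    fix p assume p: "step (\<sigma> u) a p" and r_p: "strat k r (ssubst \<tau> p)"
    have "step (ssubst \<sigma> e) a p"
      using u p by (rule step_ssubst_outI)
    then obtain r' where r': "step (ssubst \<tau> (ssubst \<sigma> e)) a r'" "strat k r' (ssubst \<tau> p)"
      using step_ssubst_strat by blast
    have "strat k r' r"
      using r'(2) strat_sym[OF r_p] by (rule strat_trans)
    with r'(1) show ?thesis by blast
  next
    fix u' assume "out (\<sigma> u) u'" and "step (\<tau> u') a r"
    then have "out (ssubst \<sigma> e) u'"
      using u by (auto simp: out_ssubst)
    then have "step (ssubst \<tau> (ssubst \<sigma> e)) a r"
      using \<open>step (\<tau> u') a r\<close> by (rule step_ssubst_outI)
    then show ?thesis using strat_refl by blast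
  qed
qed

lemma strat_ssubst_comp_Suc:
  fixes \<sigma> \<tau> :: "nat \<Rightarrow> 'a exp"
  shows "strat (Suc k) (ssubst \<tau> (ssubst \<sigma> e)) (ssubst (\<lambda>u. ssubst \<tau> (\<sigma> u)) e)"
proof (rule strat_SucI)
  show "out (ssubst \<tau> (ssubst \<sigma> e)) v \<longleftrightarrow> out (ssubst (\<lambda>u. ssubst \<tau> (\<sigma> u)) e) v" for v
    unfolding out_ssubst by blast
  show "\<exists>r'. step (ssubst (\<lambda>u. ssubst \<tau> (\<sigma> u)) e) a r' \<and> strat k r r'"
    if "step (ssubst \<tau> (ssubst \<sigma> e)) a r" for a r
    using that by (rule ssubst_ssubst_step_simulation)
  show "\<exists>r'. step (ssubst \<tau> (ssubst \<sigma> e)) a r' \<and> strat k r' r"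
    if "step (ssubst (\<lambda>u. ssubst \<tau> (\<sigma> u)) e) a r" for a r
    using that by (rule ssubst_comp_step_simulation)
qed

end

lemma strat_ssubst_and_comp:
  "(\<forall>(s :: 'a exp) t \<sigma> \<tau>. strat k s t \<longrightarrow> (\<forall>u. strat k (\<sigma> u) (\<tau> u)) \<longrightarrow>
      strat k (ssubst \<sigma> s) (ssubst \<tau> t))
   \<and> (\<forall>\<sigma> \<tau> (e :: 'a exp). strat k (ssubst \<tau> (ssubst \<sigma> e)) (ssubst (\<lambda>u. ssubst \<tau> (\<sigma> u)) e))"
proof (induction k)
  case (Suc k)
  then have "\<And>(s :: 'a exp) t \<sigma> \<tau>. strat k s t \<Longrightarrow> (\<And>u. strat k (\<sigma> u) (\<tau> u)) \<Longrightarrow>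
      strat k (ssubst \<sigma> s) (ssubst \<tau> t)"
    and "\<And>\<sigma> \<tau> (e :: 'a exp). strat k (ssubst \<tau> (ssubst \<sigma> e)) (ssubst (\<lambda>u. ssubst \<tau> (\<sigma> u)) e)"
    by blast+
  note step_k = this
  show ?case
  proof (intro conjI allI impI)
    show "strat (Suc k) (ssubst \<sigma> s) (ssubst \<tau> t)"
      if "strat (Suc k) s t" and "\<forall>u. strat (Suc k) (\<sigma> u) (\<tau> u)" for s t :: "'a exp" and \<sigma> \<tau>
      using that by (intro strat_ssubst_Suc[OF step_k]) auto
    show "strat (Suc k) (ssubst \<tau> (ssubst \<sigma> e)) (ssubst (\<lambda>u. ssubst \<tau> (\<sigma> u)) e)"
      for \<sigma> \<tau> and e :: "'a exp"
      by (rule strat_ssubst_comp_Suc[OF step_k])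
  qed
qed simp

lemma strat_ssubst:
  "strat k s t \<Longrightarrow> (\<And>u. strat k (\<sigma> u) (\<tau> u)) \<Longrightarrow> strat k (ssubst \<sigma> s) (ssubst \<tau> t)"
  using strat_ssubst_and_comp by blast

lemma strat_Mu: "strat n e f \<Longrightarrow> strat n (Mu v e) (Mu v f)"
proof (induction n arbitrary: e f)
  case (Suc k)
  have Mu_k: "strat k (Mu v e) (Mu v f)"
    using Suc.IH strat_Suc_imp_strat[OF Suc.prems] .
  have unfold: "strat k (subst1 e' (Mu v e) v) (subst1 f' (Mu v f) v)"
    if "strat k e' f'" for e' f'
    unfolding subst1_def using that by (rule strat_ssubst) (simp add: Mu_k strat_refl)
  show ?case
  proof (rule strat_SucI)
    show "out (Mu v e) w \<longleftrightarrow> out (Mu v f) w" for w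
      using strat_SucD(1)[OF Suc.prems] by simp
    show "\<exists>r'. step (Mu v f) a r' \<and> strat k r r'" if "step (Mu v e) a r" for a r
      using that strat_SucD(2)[OF Suc.prems] unfold by (fastforce intro: step_mu)
    show "\<exists>r'. step (Mu v e) a r' \<and> strat k r' r" if "step (Mu v f) a r" for a r
      using that strat_SucD(3)[OF Suc.prems] unfold by (fastforce intro: step_mu)
  qed
qed simp

lemma bisim_refl: "bisim s s"
  unfolding bisim_def is_bisim_def by (rule exI[of _ "(=)"]) blast

lemma bisim_imp_strat: "bisim s t \<Longrightarrow> strat k s t"
proof -
  assume "bisim s t"
  then obtain R where R: "is_bisim R" "R s t" unfolding bisim_def by blast
  have "strat k p q" if "R p q" for p q
    using that
  proof (induction k arbitrary: p q)
    case (Suc k)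
    then show ?case
      using R(1) unfolding is_bisim_def by (simp (no_asm_simp)) blast
  qed simp
  with R(2) show ?thesis by blast
qed

lemma bisim_class_in_ExpQ: "bisim_rel `` {s} \<in> ExpQ"
  unfolding ExpQ_def by (rule quotientI) simp

lemma in_bisim_class: "t \<in> bisim_rel `` {s} \<longleftrightarrow> bisim s t"
  unfolding bisim_rel_def by simp

lemma self_in_bisim_class: "s \<in> bisim_rel `` {s}"
  using bisim_refl in_bisim_class by blast

lemma ExpQ_nonempty: "X \<in> ExpQ \<Longrightarrow> \<exists>s. s \<in> X"
  unfolding ExpQ_def by (auto elim!: quotientE simp: bisim_rel_def intro: bisim_refl)

lemma strat_ExpQ: "X \<in> ExpQ \<Longrightarrow> s \<in> X \<Longrightarrow> t \<in> X \<Longrightarrow> strat k s t"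
  unfolding ExpQ_def
  by (auto elim!: quotientE simp: bisim_rel_def)
    (meson bisim_imp_strat strat_sym strat_trans)

lemma strat_ExpQ_classes:
  assumes "X \<in> ExpQ" "Y \<in> ExpQ" "x \<in> X" "y \<in> Y" "strat k x y" "p \<in> X" "q \<in> Y"
  shows "strat k p q"
  using assms strat_ExpQ strat_trans by meson

lemma qout_ExpQ: "X \<in> ExpQ \<Longrightarrow> x \<in> X \<Longrightarrow> qout X v \<longleftrightarrow> out x v"
  unfolding qout_def using strat_SucD(1)[OF strat_ExpQ[of X _ x "Suc 0"]] by blast

lemma qstep_bisim_classI: "x \<in> X \<Longrightarrow> step x a x' \<Longrightarrow> qstep X a (bisim_rel `` {x'})"
  unfolding qstep_def using self_in_bisim_class by blast

lemma qstep_ExpQ_match: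
  assumes "X \<in> ExpQ" "x \<in> X" "qstep X a X'"
  obtains x'' x' where "x'' \<in> X'" "step x a x'" "strat k x'' x'"
proof -
  obtain x0 x'' where x0: "x0 \<in> X" and x'': "x'' \<in> X'" and step: "step x0 a x''"
    using assms(3) unfolding qstep_def by blast
  have "strat (Suc k) x0 x"
    using assms(1) x0 assms(2) by (rule strat_ExpQ)
  then obtain x' where "step x a x'" "strat k x'' x'"
    using strat_SucD(2)[OF _ step] by blast
  with x'' show thesis by (rule that)
qed

lemma strat_if_qstrat:
  "X \<in> ExpQ \<Longrightarrow> Y \<in> ExpQ \<Longrightarrow> qstrat n X Y \<Longrightarrow> x \<in> X \<Longrightarrow> y \<in> Y \<Longrightarrow> strat n x y"
proof (induction n arbitrary: X Y x y)
  case (Suc k)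
  note q = Suc.prems(3)[unfolded qstrat.simps]
  show ?case
  proof (rule strat_SucI)
    show "out x v \<longleftrightarrow> out y v" for v
      using q qout_ExpQ[OF Suc.prems(1,4)] qout_ExpQ[OF Suc.prems(2,5)] by blast
  next
    fix a x' assume "step x a x'"
    then have "qstep X a (bisim_rel `` {x'})"
      using Suc.prems(4) by (rule qstep_bisim_classI[rotated])
    then obtain Y' where Y': "Y' \<in> ExpQ" "qstep Y a Y'" "qstrat k (bisim_rel `` {x'}) Y'"
      using q bisim_class_in_ExpQ by blast
    then obtain y'' y' where "y'' \<in> Y'" "step y a y'" "strat k y'' y'"
      using qstep_ExpQ_match[OF Suc.prems(2,5)] by blast
    moreover have "strat k x' y''"
      using Suc.IH[OF bisim_class_in_ExpQ Y'(1,3) self_in_bisim_class \<open>y'' \<in> Y'\<close>] .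
    ultimately show "\<exists>y'. step y a y' \<and> strat k x' y'"
      using strat_trans by blast
  next
    fix a y' assume "step y a y'"
    then have "qstep Y a (bisim_rel `` {y'})"
      using Suc.prems(5) by (rule qstep_bisim_classI[rotated])
    then obtain X' where X': "X' \<in> ExpQ" "qstep X a X'" "qstrat k X' (bisim_rel `` {y'})"
      using q bisim_class_in_ExpQ by blast
    then obtain x'' x' where "x'' \<in> X'" "step x a x'" "strat k x'' x'"
      using qstep_ExpQ_match[OF Suc.prems(1,4)] by blast
    moreover have "strat k x'' y'"
      using Suc.IH[OF X'(1) bisim_class_in_ExpQ X'(3) \<open>x'' \<in> X'\<close> self_in_bisim_class] .
    ultimately show "\<exists>x'. step x a x' \<and> strat k x' y'"
      using strat_trans strat_sym by blast
  qed
qed simp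

lemma qstep_simulation:
  assumes X': "X' \<in> ExpQ" and "qstep X a X'" and "y \<in> Y"
    and Xy: "\<And>x. x \<in> X \<Longrightarrow> strat (Suc k) x y"
  obtains y' where "qstep Y a (bisim_rel `` {y'})"
    and "\<And>p q. p \<in> X' \<Longrightarrow> q \<in> bisim_rel `` {y'} \<Longrightarrow> strat k p q"
proof -
  obtain x0 x' where x0: "x0 \<in> X" and x': "x' \<in> X'" and step: "step x0 a x'"
    using \<open>qstep X a X'\<close> unfolding qstep_def by blast
  obtain y' where y': "step y a y'" and x'y': "strat k x' y'"
    using strat_SucD(2)[OF Xy[OF x0] step] by blast
  show thesis
  proof (rule that)
    show "qstep Y a (bisim_rel `` {y'})"
      using \<open>y \<in> Y\<close> y' by (rule qstep_bisim_classI)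
    show "strat k p q" if "p \<in> X'" "q \<in> bisim_rel `` {y'}" for p q
      using strat_ExpQ_classes[OF X' bisim_class_in_ExpQ x' self_in_bisim_class x'y' that] .
  qed
qed

(* Stated for arbitrary sets because qmu v X need not be a class of Exp/~. *)
lemma qstrat_if_strat:
  "X \<noteq> {} \<Longrightarrow> Y \<noteq> {} \<Longrightarrow> (\<And>x y. x \<in> X \<Longrightarrow> y \<in> Y \<Longrightarrow> strat n x y) \<Longrightarrow> qstrat n X Y"
proof (induction n arbitrary: X Y)
  case (Suc k)
  obtain x1 y1 where x1: "x1 \<in> X" and y1: "y1 \<in> Y"
    using Suc.prems(1,2) by blast
  note XY = Suc.prems(3)
  have "qout X v \<longleftrightarrow> qout Y v" for v
    unfolding qout_def using strat_SucD(1)[OF XY] x1 y1 by blast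
  moreover have "\<exists>Y'\<in>ExpQ. qstep Y a Y' \<and> qstrat k X' Y'"
    if X': "X' \<in> ExpQ" and XX': "qstep X a X'" for a X'
  proof -
    obtain y' where "qstep Y a (bisim_rel `` {y'})"
      and "\<And>p q. p \<in> X' \<Longrightarrow> q \<in> bisim_rel `` {y'} \<Longrightarrow> strat k p q"
      using qstep_simulation[OF X' XX' y1 XY[OF _ y1]] by blast
    moreover have "X' \<noteq> {}"
      using XX' unfolding qstep_def by blast
    ultimately show ?thesis
      using Suc.IH[of X' "bisim_rel `` {y'}"] bisim_class_in_ExpQ self_in_bisim_class by blast
  qed
  moreover have "\<exists>X'\<in>ExpQ. qstep X a X' \<and> qstrat k X' Y'"
    if Y': "Y' \<in> ExpQ" and YY': "qstep Y a Y'" for a Y'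
  proof -
    obtain x' where "qstep X a (bisim_rel `` {x'})"
      and "\<And>q p. q \<in> Y' \<Longrightarrow> p \<in> bisim_rel `` {x'} \<Longrightarrow> strat k q p"
      using qstep_simulation[OF Y' YY' x1 strat_sym[OF XY[OF x1]]] by blast
    moreover have "Y' \<noteq> {}"
      using YY' unfolding qstep_def by blast
    ultimately show ?thesis
      using Suc.IH[of "bisim_rel `` {x'}" Y'] bisim_class_in_ExpQ self_in_bisim_class strat_sym
      by blast
  qed
  ultimately show ?case by simp
qed simp

theorem mainTheorem13:
  fixes e f :: "'a exp set" and x :: nat and n :: nat
  assumes "e \<in> ExpQ" and "f \<in> ExpQ"
    and "qstrat n e f"
  shows "qstrat n (qmu x e) (qmu x f)"
proof (rule qstrat_if_strat)
  show "qmu x e \<noteq> {}" "qmu x f \<noteq> {}"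
    using ExpQ_nonempty[OF assms(1)] ExpQ_nonempty[OF assms(2)]
    unfolding qmu_def by (auto intro: bisim_refl)
next
  fix p q assume "p \<in> qmu x e" "q \<in> qmu x f"
  then obtain e1 f1 where "e1 \<in> e" "bisim p (Mu x e1)" "f1 \<in> f" "bisim q (Mu x f1)"
    unfolding qmu_def by blast
  then have "strat n p (Mu x e1)" "strat n (Mu x e1) (Mu x f1)" "strat n (Mu x f1) q"
    using strat_if_qstrat[OF assms] strat_Mu bisim_imp_strat strat_sym by blast+
  then show "strat n p q"
    using strat_trans by blast
qed

end
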